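(* Let $n$ be an even positive integer, and let $a,b$ be distinct integers with $0<a,b<n$, $a$ even and $b$ odd, so that $G=C_{2n}(a,b,n)$ is a $5$-regular circulant graph. Then $G$ admits a factorization (in the sense described in the context) as a Cartesian product of a $3$-regular circulant graph and a $2$-regular circulant graph if and only if there exist positive integers $p,q$ with $p>2$, $1<q<n$, $p\mid a$, $q\mid b$, $pq=2n$ and $\gcd(p,q)=1$.
   Context: For an integer $m$ and a set $R$ of positive integers each at most $m/2$, the circulant graph $C_m(R)$ has vertex set $\{0,1,\dots,m-1\}$, with $i$ and $j$ adjacent iff $\min(|i-j|,\,m-|i-j|)\in R$; it is regular of degree $2|R|$ if $m/2\notin R$ and of degree $2|R|-1$ if $m/2\in R$. $C_{2n}(a,b,n)$ denotes the circulant graph on $2n$ vertices with jump set $\{a,b,n\}$. The Cartesian product $G_1\square G_2$ has vertex set $V(G_1)\times V(G_2)$, with $(u_1,v_1)\sim(u_2,v_2)$ iff either $u_1=u_2$ and $v_1v_2\in E(G_2)$, or $v_1=v_2$ and $u_1u_2\in E(G_1)$. The factorization theorem for circulant graphs states: if $p,q$ are relatively prime, $R\subseteq[1,p/2]$, $S\subseteq[1,q/2]$ and $T=qR\cup pS$ (where $qR=\{qr:r\in R\}$, $pS=\{ps:s\in S\}$), then $C_{pq}(T)\cong C_p(R)\square C_q(S)$. "$G=C_{2n}(a,b,n)$ admits a factorization as a Cartesian product of a $3$-regular and a $2$-regular circulant graph" means: there exist relatively prime integers $p,q>1$ with $pq=2n$ and sets of integers $R\subseteq[1,p/2]$, $S\subseteq[1,q/2]$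 with $qR\cup pS=\{a,b,n\}$, such that $C_p(R)$ is $3$-regular and $C_q(S)$ is $2$-regular (so that $G\cong C_p(R)\square C_q(S)$ by the factorization theorem). *)

theory Defs
  imports Main
begin

definition circ_adj :: "nat \<Rightarrow> nat set \<Rightarrow> nat \<Rightarrow> nat \<Rightarrow> bool" where
  "circ_adj m R i j \<longleftrightarrow> i < m \<and> j < m \<and>
     (let d = (if j \<le> i then i - j else j - i) in min d (m - d) \<in> R)"

definition circ_regular :: "nat \<Rightarrow> nat set \<Rightarrow> nat \<Rightarrow> bool" where
  "circ_regular m R k \<longleftrightarrow> (\<forall>i<m. card {j. j < m \<and> circ_adj m R i j} = k)"

definition admits_3_2_factorization :: "nat \<Rightarrow> nat \<Rightarrow> nat \<Rightarrow> bool" where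
  "admits_3_2_factorization n a b \<longleftrightarrow>
     (\<exists>p q R S. p > 1 \<and> q > 1 \<and> coprime p q \<and> p * q = 2 * n \<and>
        (\<forall>r\<in>R. 1 \<le> r \<and> 2 * r \<le> p) \<and> (\<forall>s\<in>S. 1 \<le> s \<and> 2 * s \<le> q) \<and>
        ((\<lambda>r. q * r) ` R \<union> (\<lambda>s. p * s) ` S = {a, b, n}) \<and>
        circ_regular p R 3 \<and> circ_regular q S 2)"

end

theory Submission
  imports Defs "HOL-Number_Theory.Cong"
begin

(* A circulant graph is vertex-transitive, so C_m(R) is k-regular iff vertex 0 has k neighbours.
   For R \<subseteq> [1, m/2] these are R \<union> (m - R), and r = m - r only for r = m/2, so C_m(R) has
   degree 2|R| - [m/2 \<in> R]. Hence the 3-regular ones are C_m(y, m/2) with y < m/2 and the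
   2-regular ones are the cycles C_m(s) with s < m/2. A factorization of C_{2n}(a,b,n) therefore
   has jump set {q y, q p/2, p s} = {q y, n, p s} with p even, and since p s is even the odd jump
   b must be q y and a must be p s. Conversely, divisors p | a and q | b with p q = 2n and
   gcd p q = 1 yield the factors C_p(b/q, p/2) and C_q(a/p). *)

definition circ_neighbours :: "nat \<Rightarrow> nat set \<Rightarrow> nat \<Rightarrow> nat set" where
  "circ_neighbours m R i = {j. j < m \<and> circ_adj m R i j}"

lemma circ_adj_0_iff: "circ_adj m R 0 j \<longleftrightarrow> j < m \<and> min j (m - j) \<in> R"
  by (auto simp: circ_adj_def Let_def)

lemma circ_adj_shift:
  assumes "i < m" "j < m"
  shows "circ_adj m R i ((j + i) mod m) \<longleftrightarrow> circ_adj m R 0 j"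
proof (cases "j + i < m")
  case True
  then show ?thesis using assms by (auto simp: circ_adj_def Let_def)
next
  case False
  then have "(j + i) mod m = j + i - m" using assms by (simp add: mod_if)
  moreover have "min (m - j) (m - (m - j)) = min j (m - j)" using assms by auto
  ultimately show ?thesis using False assms by (auto simp: circ_adj_def Let_def)
qed

lemma inj_on_add_mod: "inj_on (\<lambda>j. (j + i) mod m) {..<(m::nat)}"
proof (rule inj_onI)
  fix x y assume "x \<in> {..<m}" "y \<in> {..<m}" "(x + i) mod m = (y + i) mod m"
  then show "x = y"
    by (metis cong_def cong_add_rcancel_nat cong_less_modulus_unique_nat lessThan_iff)
qed

lemma circ_neighbours_shift:
  assumes "i < m"
  shows "circ_neighbours m R i = (\<lambda>j. (j + i) mod m) ` circ_neighbours m R 0"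
  unfolding circ_neighbours_def
proof (intro set_eqI iffI)
  fix k assume k: "k \<in> {k. k < m \<and> circ_adj m R i k}"
  have "(\<lambda>j. (j + i) mod m) ` {..<m} = {..<m}"
    using assms by (simp add: endo_inj_surj inj_on_add_mod image_subset_iff)
  with k have "k \<in> (\<lambda>j. (j + i) mod m) ` {..<m}" by simp
  then obtain j where "j < m" "k = (j + i) mod m" by blast
  with k show "k \<in> (\<lambda>j. (j + i) mod m) ` {j. j < m \<and> circ_adj m R 0 j}"
    using circ_adj_shift[OF assms \<open>j < m\<close>] by auto
next
  fix k assume "k \<in> (\<lambda>j. (j + i) mod m) ` {j. j < m \<and> circ_adj m R 0 j}"
  then obtain j where "j < m" "circ_adj m R 0 j" "k = (j + i) mod m" by auto
  then show "k \<in> {k. k < m \<and> circ_adj m R i k}"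
    using circ_adj_shift[OF assms \<open>j < m\<close>] assms by auto
qed

lemma card_circ_neighbours:
  assumes "i < m"
  shows "card (circ_neighbours m R i) = card (circ_neighbours m R 0)"
  unfolding circ_neighbours_shift[OF assms]
  by (rule card_image, rule inj_on_subset[OF inj_on_add_mod]) (auto simp: circ_neighbours_def)

lemma circ_regular_iff_card_neighbours_0:
  assumes "0 < m"
  shows "circ_regular m R k \<longleftrightarrow> card (circ_neighbours m R 0) = k"
  using assms card_circ_neighbours unfolding circ_regular_def circ_neighbours_def by metis

lemma circ_neighbours_0:
  assumes "\<forall>r\<in>R. 1 \<le> r \<and> 2 * r \<le> m"
  shows "circ_neighbours m R 0 = R \<union> (\<lambda>r. m - r) ` R"
  unfolding circ_neighbours_def
proof (intro set_eqI iffI)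
  fix j assume "j \<in> {j. j < m \<and> circ_adj m R 0 j}"
  then have "j < m" "min j (m - j) \<in> R" by (auto simp: circ_adj_0_iff)
  then show "j \<in> R \<union> (\<lambda>r. m - r) ` R"
    by (cases "j \<le> m - j") (auto simp: min_def image_iff intro: bexI[of _ "m - j"])
next
  fix j assume "j \<in> R \<union> (\<lambda>r. m - r) ` R"
  then consider "j \<in> R" | r where "r \<in> R" "j = m - r" by blast
  then show "j \<in> {j. j < m \<and> circ_adj m R 0 j}"
  proof cases
    case 1
    with assms have "j < m" "min j (m - j) = j" by fastforce+
    with 1 show ?thesis by (simp add: circ_adj_0_iff)
  next
    case 2
    with assms have "j < m" "min j (m - j) = r" by fastforce+
    with 2 show ?thesis by (simp add: circ_adj_0_iff)
  qed
qed

lemma circ_regular_iff: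
  assumes "0 < m" and R: "\<forall>r\<in>R. 1 \<le> r \<and> 2 * r \<le> m"
  shows "circ_regular m R k \<longleftrightarrow>
    k = (if \<exists>r\<in>R. 2 * r = m then 2 * card R - 1 else 2 * card R)"
proof -
  have "finite R" using R by (intro finite_subset[of R "{..m}"]) auto
  have "inj_on (\<lambda>r. m - r) R" using R by (intro inj_onI) fastforce
  have "R \<inter> (\<lambda>r. m - r) ` R = {r\<in>R. 2 * r = m}"
  proof (intro set_eqI iffI)
    fix x assume "x \<in> R \<inter> (\<lambda>r. m - r) ` R"
    then obtain r where "x \<in> R" "r \<in> R" "x = m - r" by blast
    moreover have "2 * x \<le> m" "2 * r \<le> m" using R \<open>x \<in> R\<close> \<open>r \<in> R\<close> by auto
    ultimately show "x \<in> {r\<in>R. 2 * r = m}" by auto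
  next
    fix x assume "x \<in> {r\<in>R. 2 * r = m}"
    then have "x \<in> R" "x = m - x" by auto
    then show "x \<in> R \<inter> (\<lambda>r. m - r) ` R" by blast
  qed
  also have "\<dots> = (if \<exists>r\<in>R. 2 * r = m then {m div 2} else {})" by auto
  finally have "card (R \<union> (\<lambda>r. m - r) ` R) + (if \<exists>r\<in>R. 2 * r = m then 1 else 0) = 2 * card R"
    using card_Un_Int[of R "(\<lambda>r. m - r) ` R"] card_image[OF \<open>inj_on _ R\<close>] \<open>finite R\<close>
    by (simp split: if_splits)
  then show ?thesis
    unfolding circ_regular_iff_card_neighbours_0[OF \<open>0 < m\<close>] circ_neighbours_0[OF R] by auto
qed

lemma circ_regular_3_iff:
  assumes "0 < m" and R: "\<forall>r\<in>R. 1 \<le> r \<and> 2 * r \<le> m"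
  shows "circ_regular m R 3 \<longleftrightarrow> (\<exists>x y. R = {x, y} \<and> 2 * x = m \<and> 2 * y < m)"
proof
  assume "circ_regular m R 3"
  then have "(\<exists>r\<in>R. 2 * r = m) \<and> card R = 2"
    unfolding circ_regular_iff[OF assms] by (simp split: if_splits) presburger
  then obtain x where x: "x \<in> R" "2 * x = m" and "card R = 2" by blast
  then obtain y where "R - {x} = {y}"
    by (metis card_1_singletonE card_Diff_singleton diff_add_inverse2 nat_1_add_1)
  then have "R = {x, y}" "y \<in> R" "y \<noteq> x" using x by auto
  with x R show "\<exists>x y. R = {x, y} \<and> 2 * x = m \<and> 2 * y < m" by force
next
  assume "\<exists>x y. R = {x, y} \<and> 2 * x = m \<and> 2 * y < m"
  then obtain x y where "R = {x, y}" "2 * x = m" "2 * y < m" by blast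
  then show "circ_regular m R 3" unfolding circ_regular_iff[OF assms] by auto
qed

lemma circ_regular_2_iff:
  assumes "0 < m" and S: "\<forall>s\<in>S. 1 \<le> s \<and> 2 * s \<le> m"
  shows "circ_regular m S 2 \<longleftrightarrow> (\<exists>s. S = {s} \<and> 2 * s < m)"
proof
  assume "circ_regular m S 2"
  then have "\<not> (\<exists>s\<in>S. 2 * s = m) \<and> card S = 1"
    unfolding circ_regular_iff[OF assms] by (simp split: if_splits) presburger
  with S show "\<exists>s. S = {s} \<and> 2 * s < m"
    by (metis card_1_singletonE insertI1 order_less_le)
next
  assume "\<exists>s. S = {s} \<and> 2 * s < m"
  then show "circ_regular m S 2" unfolding circ_regular_iff[OF assms] by auto
qed

lemma admits_3_2_factorization_iff:
  "admits_3_2_factorization n a b \<longleftrightarrow>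
     (\<exists>p q y s. 1 < q \<and> coprime p q \<and> p * q = 2 * n \<and> even p \<and>
        1 \<le> y \<and> 2 * y < p \<and> 1 \<le> s \<and> 2 * s < q \<and> {q * y, n, p * s} = {a, b, n})"
proof
  assume "admits_3_2_factorization n a b"
  then obtain p q R S where pq: "1 < p" "1 < q" "coprime p q" "p * q = 2 * n"
    and R: "\<forall>r\<in>R. 1 \<le> r \<and> 2 * r \<le> p" and S: "\<forall>s\<in>S. 1 \<le> s \<and> 2 * s \<le> q"
    and img: "(\<lambda>r. q * r) ` R \<union> (\<lambda>s. p * s) ` S = {a, b, n}"
    and "circ_regular p R 3" "circ_regular q S 2"
    unfolding admits_3_2_factorization_def by blast
  have "0 < p" "0 < q" using pq by simp_all
  from \<open>circ_regular p R 3\<close> obtain x y where xy: "R = {x, y}" "2 * x = p" "2 * y < p"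
    unfolding circ_regular_3_iff[OF \<open>0 < p\<close> R] by blast
  from \<open>circ_regular q S 2\<close> obtain s where s: "S = {s}" "2 * s < q"
    unfolding circ_regular_2_iff[OF \<open>0 < q\<close> S] by blast
  have "q * x = n" using pq(4) xy(2) by auto
  then have "(\<lambda>r. q * r) ` R \<union> (\<lambda>s. p * s) ` S = {q * y, n, p * s}" using xy s by auto
  with img have "{q * y, n, p * s} = {a, b, n}" by simp
  moreover have "1 \<le> y" "1 \<le> s" using R S xy s by auto
  moreover have "even p" using xy(2) by auto
  ultimately show "\<exists>p q y s. 1 < q \<and> coprime p q \<and> p * q = 2 * n \<and> even p \<and>
      1 \<le> y \<and> 2 * y < p \<and> 1 \<le> s \<and> 2 * s < q \<and> {q * y, n, p * s} = {a, b, n}"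
    using pq xy s by blast
next
  assume "\<exists>p q y s. 1 < q \<and> coprime p q \<and> p * q = 2 * n \<and> even p \<and>
      1 \<le> y \<and> 2 * y < p \<and> 1 \<le> s \<and> 2 * s < q \<and> {q * y, n, p * s} = {a, b, n}"
  then obtain p q y s where pq: "1 < q" "coprime p q" "p * q = 2 * n" "even p"
    and y: "1 \<le> y" "2 * y < p" and s: "1 \<le> s" "2 * s < q"
    and abn: "{q * y, n, p * s} = {a, b, n}"
    by blast
  have "1 < p" "0 < p" "0 < q" using y pq(1) by simp_all
  obtain x where x: "p = 2 * x" using \<open>even p\<close> ..
  with pq(3) have "q * x = n" by (simp add: mult.commute)
  define R where "R = {x, y}"
  define S where "S = {s}"
  have R: "\<forall>r\<in>R. 1 \<le> r \<and> 2 * r \<le> p" and S: "\<forall>s\<in>S. 1 \<le> s \<and> 2 * s \<le> q"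
    using y s x by (auto simp: R_def S_def)
  have "circ_regular p R 3"
    unfolding circ_regular_3_iff[OF \<open>0 < p\<close> R] using x y(2) R_def by blast
  moreover have "circ_regular q S 2"
    unfolding circ_regular_2_iff[OF \<open>0 < q\<close> S] using s(2) S_def by blast
  moreover have "(\<lambda>r. q * r) ` R \<union> (\<lambda>s. p * s) ` S = {q * y, n, p * s}"
    using \<open>q * x = n\<close> by (auto simp: R_def S_def)
  with abn have "(\<lambda>r. q * r) ` R \<union> (\<lambda>s. p * s) ` S = {a, b, n}" by simp
  ultimately show "admits_3_2_factorization n a b"
    unfolding admits_3_2_factorization_def using \<open>1 < p\<close> pq(1-3) R S by blast
qed

lemma divisors_if_admits_3_2_factorization:
  assumes "admits_3_2_factorization n a b"
    and "a \<noteq> b" "a < n" "b < n" "odd b"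
  shows "\<exists>p q. p > 2 \<and> 1 < q \<and> q < n \<and> p dvd a \<and> q dvd b \<and> p * q = 2 * n \<and> gcd p q = 1"
proof -
  obtain p q y s where "1 < q" "coprime p q" "p * q = 2 * n" "even p"
    and "1 \<le> y" "2 * y < p" and abn: "{q * y, n, p * s} = {a, b, n}"
    using assms(1) unfolding admits_3_2_factorization_iff by blast
  have "b \<in> {q * y, n, p * s}" "a \<in> {q * y, n, p * s}" unfolding abn by simp_all
  then have "q dvd b" "p dvd a"
    using \<open>even p\<close> assms(2-5) by auto
  moreover have "4 \<le> p" using \<open>1 \<le> y\<close> \<open>2 * y < p\<close> \<open>even p\<close> by presburger
  then have "q * 4 \<le> 2 * n" using \<open>p * q = 2 * n\<close> by (metis mult.commute mult_le_mono2)
  then have "q < n" using \<open>1 < q\<close> by linarith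
  moreover have "gcd p q = 1" using \<open>coprime p q\<close> by simp
  ultimately have "p > 2 \<and> 1 < q \<and> q < n \<and> p dvd a \<and> q dvd b \<and> p * q = 2 * n \<and> gcd p q = 1"
    using \<open>4 \<le> p\<close> \<open>1 < q\<close> \<open>p * q = 2 * n\<close> by simp
  then show ?thesis by (intro exI)
qed

lemma admits_3_2_factorization_if_divisors:
  assumes "1 < q" "p * q = 2 * n" "coprime p q" "p dvd a" "q dvd b"
    and "0 < a" "a < n" "0 < b" "b < n" "odd b"
  shows "admits_3_2_factorization n a b"
proof -
  obtain y s where b: "b = q * y" and a: "a = p * s" using assms(4,5) by (auto elim!: dvdE)
  have "odd q" using \<open>odd b\<close> b by simp
  then have "even p" using \<open>p * q = 2 * n\<close> by (metis dvd_triv_left even_mult_iff)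
  have "q * (2 * y) < q * p" using b \<open>p * q = 2 * n\<close> \<open>b < n\<close> by (simp add: ac_simps)
  moreover have "p * (2 * s) < p * q" using a \<open>p * q = 2 * n\<close> \<open>a < n\<close> by (simp add: ac_simps)
  ultimately have "2 * y < p" "2 * s < q" by simp_all
  moreover have "1 \<le> y" "1 \<le> s" using a b \<open>0 < a\<close> \<open>0 < b\<close> by simp_all
  moreover have "{q * y, n, p * s} = {a, b, n}" using a b by auto
  ultimately have "1 < q \<and> coprime p q \<and> p * q = 2 * n \<and> even p \<and>
      1 \<le> y \<and> 2 * y < p \<and> 1 \<le> s \<and> 2 * s < q \<and> {q * y, n, p * s} = {a, b, n}"
    using assms(1-3) \<open>even p\<close> by blast
  then show ?thesis unfolding admits_3_2_factorization_iff by (intro exI)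
qed

theorem theorem31:
  fixes n a b :: nat
  assumes "n > 0" and "even n"
    and "a \<noteq> b" and "0 < a" and "a < n" and "0 < b" and "b < n"
    and "even a" and "odd b"
  shows "admits_3_2_factorization n a b \<longleftrightarrow>
         (\<exists>p q :: nat. p > 2 \<and> 1 < q \<and> q < n \<and> p dvd a \<and> q dvd b \<and>
            p * q = 2 * n \<and> gcd p q = 1)"
proof
  assume "admits_3_2_factorization n a b"
  then show "\<exists>p q. p > 2 \<and> 1 < q \<and> q < n \<and> p dvd a \<and> q dvd b \<and> p * q = 2 * n \<and> gcd p q = 1"
    using assms(3,5,7,9) by (rule divisors_if_admits_3_2_factorization)
next
  assume "\<exists>p q. p > 2 \<and> 1 < q \<and> q < n \<and> p dvd a \<and> q dvd b \<and> p * q = 2 * n \<and> gcd p q = 1"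
  then obtain p q where "1 < q" "p * q = 2 * n" "coprime p q" "p dvd a" "q dvd b"
    by (auto simp: coprime_iff_gcd_eq_1)
  then show "admits_3_2_factorization n a b"
    using assms(4-7,9) by (rule admits_3_2_factorization_if_divisors)
qed

end
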